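(* Let $\beta$ be a $\tau$-invariant subset of $\alpha$. If two étale words over $\beta$ are homotopic in the class of étale words over $\alpha$, then they are homotopic in the class of étale words over $\beta$.
   Context: Fix a set $\alpha$ with an involution $\tau$; a $\tau$-invariant subset $\beta\subset\alpha$ carries the restricted involution. For a set $\gamma$ with involution $\tau$: a $\gamma$-alphabet is a set $\mathcal A$ with a map $A\mapsto|A|\in\gamma$; an étale word over $\gamma$ is a pair $(\mathcal A,w)$ with $\mathcal A$ a $\gamma$-alphabet and $w$ a finite word in letters of $\mathcal A$; an étale word over $\beta$ is regarded as an étale word over $\alpha$ via the inclusion $\beta\subset\alpha$. A nanoword is an étale word with $\mathcal A$ finite and each letter occurring exactly twice; nanowords are isomorphic if a bijection of alphabets preserving $|\cdot|$ carries one word letterwise to the other. Homotopy moves on nanowords over $\gamma$ ($x,y,z,t$ words in the remaining letters): (1) $(\mathcal A,xAAy)\mapsto(\mathcal A\setminus\{A\},xy)$; (2) $(\mathcal A,xAByBAz)\mapsto(\mathcal A\setminus\{A,B\},xyz)$ if $|B|=\tau(|A|)$; (3) $(\mathcal A,xAByACzBCt)\mapsto(\mathcal A,xBAyCAzCBt)$ if $A,B,C$ distinct with $|A|=|B|=|C|$. Homotopy of nanowords over $\gamma$ is generated by isomorphisms, these moves and their inverses (with all intermediate nanowords over $\gamma$). Desingularization: for an étale word $(\mathcal A,w)$ with $m_w(A)$ the number of occurrences of $A$, let $\mathcal A^d=\{A_{i,j}:1\le i<j\le m_w(A)\}$, $|A_{i,j}|=|A|$, and $w^d$ obtained from $w$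 by deleting letters of multiplicity 1 and replacing the $i$-th occurrence of $A$ ($m=m_w(A)\ge2$) by $A_{1,i}\cdots A_{i-1,i}A_{i,i+1}\cdots A_{i,m}$. Two étale words over $\gamma$ are homotopic over $\gamma$ if their desingularizations are homotopic nanowords over $\gamma$. *)

theory Defs
  imports Main
begin

text \<open>An etale word is a triple (A, lab, w): an alphabet A (a set of letters of type 'l),
  a labelling map lab : A -> gamma (values outside A are irrelevant), and a finite word w
  in the letters of A.\<close>

type_synonym ('l, 'a) etale = "'l set \<times> ('l \<Rightarrow> 'a) \<times> 'l list"

definition involution_on :: "'a set \<Rightarrow> ('a \<Rightarrow> 'a) \<Rightarrow> bool" where
  "involution_on X t \<longleftrightarrow> (\<forall>x\<in>X. t x \<in> X \<and> t (t x) = x)"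

definition etale_word_over :: "'a set \<Rightarrow> ('l, 'a) etale \<Rightarrow> bool" where
  "etale_word_over \<gamma> E \<longleftrightarrow>
     (case E of (A, lab, w) \<Rightarrow> lab ` A \<subseteq> \<gamma> \<and> set w \<subseteq> A)"

definition nanoword_over :: "'a set \<Rightarrow> ('l, 'a) etale \<Rightarrow> bool" where
  "nanoword_over \<gamma> E \<longleftrightarrow> etale_word_over \<gamma> E \<and>
     (case E of (A, lab, w) \<Rightarrow> finite A \<and> (\<forall>a\<in>A. count_list w a = 2))"

definition nano_iso :: "('l, 'a) etale \<Rightarrow> ('l, 'a) etale \<Rightarrow> bool" where
  "nano_iso E E' \<longleftrightarrow>
     (case E of (A, lab, w) \<Rightarrow> case E' of (A', lab', w') \<Rightarrow>
       (\<exists>f. bij_betw f A A' \<and> (\<forall>a\<in>A. lab' (f a) = lab a) \<and> w' = map f w))"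

inductive nano_move :: "('a \<Rightarrow> 'a) \<Rightarrow> ('l, 'a) etale \<Rightarrow> ('l, 'a) etale \<Rightarrow> bool"
  for t :: "'a \<Rightarrow> 'a" where
  move1: "nano_move t (A, lab, x @ [a, a] @ y) (A - {a}, lab, x @ y)"
| move2: "a \<noteq> b \<Longrightarrow> lab b = t (lab a) \<Longrightarrow>
          nano_move t (A, lab, x @ [a, b] @ y @ [b, a] @ z) (A - {a, b}, lab, x @ y @ z)"
| move3: "distinct [a, b, c] \<Longrightarrow> lab a = lab b \<Longrightarrow> lab b = lab c \<Longrightarrow>
          nano_move t (A, lab, x @ [a, b] @ y @ [a, c] @ z @ [b, c] @ u)
                      (A, lab, x @ [b, a] @ y @ [c, a] @ z @ [c, b] @ u)"

definition nano_step :: "('a \<Rightarrow> 'a) \<Rightarrow> 'a set \<Rightarrow> ('l, 'a) etale \<Rightarrow> ('l, 'a) etale \<Rightarrow> bool" where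
  "nano_step t \<gamma> E E' \<longleftrightarrow> nanoword_over \<gamma> E \<and> nanoword_over \<gamma> E' \<and>
     (nano_iso E E' \<or> nano_move t E E' \<or> nano_move t E' E)"

definition nano_homotopic :: "('a \<Rightarrow> 'a) \<Rightarrow> 'a set \<Rightarrow> ('l, 'a) etale \<Rightarrow> ('l, 'a) etale \<Rightarrow> bool" where
  "nano_homotopic t \<gamma> = (nano_step t \<gamma>)\<^sup>*\<^sup>*"

text \<open>The letter A_{i,j} is represented as (A, i, j).
  The k-th position (0-based) of w carries letter a = w!k, which is its i-th occurrence
  with i = (number of a's before position k) + 1.\<close>
definition desing_word :: "'l list \<Rightarrow> ('l \<times> nat \<times> nat) list" where
  "desing_word w = concat (map (\<lambda>k.
      let a = w ! k; i = count_list (take k w) a + 1; m = count_list w a in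
      if m \<ge> 2 then map (\<lambda>h. (a, h, i)) [1..<i] @ map (\<lambda>h. (a, i, h)) [Suc i..<Suc m]
      else []) [0..<length w])"

definition desing :: "('l, 'a) etale \<Rightarrow> ('l \<times> nat \<times> nat, 'a) etale" where
  "desing E = (case E of (A, lab, w) \<Rightarrow>
     ({(a, i, j) | a i j. a \<in> A \<and> 1 \<le> i \<and> i < j \<and> j \<le> count_list w a},
      (\<lambda>(a, i, j). lab a),
      desing_word w))"

definition etale_homotopic :: "('a \<Rightarrow> 'a) \<Rightarrow> 'a set \<Rightarrow> ('l, 'a) etale \<Rightarrow> ('l, 'a) etale \<Rightarrow> bool" where
  "etale_homotopic t \<gamma> E E' \<longleftrightarrow> nano_homotopic t \<gamma> (desing E) (desing E')"

end

theory Submission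
  imports Defs
begin

text \<open>Deleting every letter whose label lies outside the \<open>\<tau>\<close>-invariant set \<open>\<beta>\<close> sends
  nanowords over \<open>\<alpha>\<close> to nanowords over \<open>\<beta>\<close>, isomorphisms to isomorphisms, and each homotopy
  move to the same move or to the identity: a second move cancels two letters labelled \<open>x\<close> and
  \<open>\<tau> x\<close>, which are kept or deleted together, and a third move permutes three letters of one
  label. So the deletion turns an \<open>\<alpha>\<close>-homotopy between desingularizations of words over \<open>\<beta>\<close>
  into a \<open>\<beta>\<close>-homotopy between the same desingularizations, which it does not change.\<close>

definition restrict_labels :: "'a set \<Rightarrow> ('l, 'a) etale \<Rightarrow> ('l, 'a) etale" where
  "restrict_labels \<beta> E = (case E of (A, lab, w) \<Rightarrow>
     (A \<inter> {a. lab a \<in> \<beta>}, lab, filter (\<lambda>a. lab a \<in> \<beta>) w))"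

lemma restrict_labels_simp [simp]:
  "restrict_labels \<beta> (A, lab, w) = (A \<inter> {a. lab a \<in> \<beta>}, lab, filter (\<lambda>a. lab a \<in> \<beta>) w)"
  by (simp add: restrict_labels_def)

lemma restrict_labels_etale_word_over:
  assumes "etale_word_over \<beta> E"
  shows "restrict_labels \<beta> E = E"
proof (cases E)
  case (fields A lab w)
  with assms have "lab ` A \<subseteq> \<beta>" and "set w \<subseteq> A"
    by (auto simp: etale_word_over_def)
  then have "A \<inter> {a. lab a \<in> \<beta>} = A" and "filter (\<lambda>a. lab a \<in> \<beta>) w = w"
    by (auto simp: filter_id_conv)
  with fields show ?thesis by simp
qed

lemma nanoword_over_restrict_labels:
  assumes "nanoword_over \<alpha> E"
  shows "nanoword_over \<beta> (restrict_labels \<beta> E)"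
proof (cases E)
  case (fields A lab w)
  with assms have "finite A" and "set w \<subseteq> A" and twice: "\<forall>a\<in>A. count_list w a = 2"
    by (auto simp: nanoword_over_def etale_word_over_def)
  have "count_list (filter (\<lambda>a. lab a \<in> \<beta>) w) a = count_list w a" if "lab a \<in> \<beta>" for a
    using that by (induction w) auto
  with twice fields \<open>finite A\<close> \<open>set w \<subseteq> A\<close> show ?thesis
    by (auto simp: nanoword_over_def etale_word_over_def)
qed

lemma nano_iso_restrict_labels:
  assumes "nano_iso E E'" and "etale_word_over \<alpha> E"
  shows "nano_iso (restrict_labels \<beta> E) (restrict_labels \<beta> E')"
proof -
  obtain A lab w A' lab' w' where E: "E = (A, lab, w)" and E': "E' = (A', lab', w')"
    by (cases E, cases E')
  with assms obtain f where bij: "bij_betw f A A'" and lab_f: "\<forall>a\<in>A. lab' (f a) = lab a"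
    and w': "w' = map f w" and "set w \<subseteq> A"
    by (auto simp: nano_iso_def etale_word_over_def)
  have "f ` (A \<inter> {a. lab a \<in> \<beta>}) = A' \<inter> {a. lab' a \<in> \<beta>}"
    using bij lab_f by (force simp: bij_betw_def)
  with bij have "bij_betw f (A \<inter> {a. lab a \<in> \<beta>}) (A' \<inter> {a. lab' a \<in> \<beta>})"
    by (auto simp: bij_betw_def intro: inj_on_subset)
  moreover have "filter (\<lambda>a. lab' a \<in> \<beta>) w' = map f (filter (\<lambda>a. lab a \<in> \<beta>) w)"
    using \<open>set w \<subseteq> A\<close> lab_f unfolding w' filter_map comp_def
    by (intro arg_cong[where f = "map f"] filter_cong) auto
  ultimately show ?thesis
    using lab_f E E' by (auto simp: nano_iso_def)
qed

lemma nano_move_restrict_labels: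
  assumes "involution_on \<alpha> \<tau>" and "\<tau> ` \<beta> \<subseteq> \<beta>"
    and "nano_move \<tau> E E'" and "etale_word_over \<alpha> E"
  shows "restrict_labels \<beta> E = restrict_labels \<beta> E'
    \<or> nano_move \<tau> (restrict_labels \<beta> E) (restrict_labels \<beta> E')"
  using assms(3,4)
proof cases
  case (move1 A lab x a y)
  let ?keep = "\<lambda>a. lab a \<in> \<beta>"
  have "(A - {a}) \<inter> Collect ?keep = A \<inter> Collect ?keep - {a} \<inter> Collect ?keep"
    by blast
  with move1 show ?thesis
    using nano_move.move1[of \<tau> "A \<inter> Collect ?keep" lab "filter ?keep x" a "filter ?keep y"]
    by (cases "?keep a") auto
next
  case (move2 a b lab A x y z)
  let ?keep = "\<lambda>a. lab a \<in> \<beta>"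
  have "\<tau> (lab b) = lab a"
    using assms(1,4) move2 by (auto simp: involution_on_def etale_word_over_def)
  then have "?keep a \<longleftrightarrow> ?keep b"
    using assms(2) move2 by auto
  moreover have "(A - {a, b}) \<inter> Collect ?keep = A \<inter> Collect ?keep - {a, b} \<inter> Collect ?keep"
    by blast
  ultimately show ?thesis
    using move2 nano_move.move2[of a b lab \<tau> "A \<inter> Collect ?keep" "filter ?keep x"
        "filter ?keep y" "filter ?keep z"]
    by (cases "?keep a") auto
next
  case (move3 a b c lab A x y z u)
  let ?keep = "\<lambda>a. lab a \<in> \<beta>"
  from move3 show ?thesis
    using nano_move.move3[of a b c lab \<tau> "A \<inter> Collect ?keep" "filter ?keep x"]
    by (cases "?keep a") auto
qed

lemma nano_step_restrict_labels:
  assumes "involution_on \<alpha> \<tau>" and "\<tau> ` \<beta> \<subseteq> \<beta>" and "nano_step \<tau> \<alpha> E E'"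
  shows "(nano_step \<tau> \<beta>)\<^sup>=\<^sup>= (restrict_labels \<beta> E) (restrict_labels \<beta> E')"
proof -
  from assms(3) have nano: "nanoword_over \<alpha> E" "nanoword_over \<alpha> E'"
    and "nano_iso E E' \<or> nano_move \<tau> E E' \<or> nano_move \<tau> E' E"
    by (auto simp: nano_step_def)
  moreover from nano have "etale_word_over \<alpha> E" "etale_word_over \<alpha> E'"
    by (auto simp: nanoword_over_def)
  ultimately have "restrict_labels \<beta> E = restrict_labels \<beta> E'
      \<or> nano_iso (restrict_labels \<beta> E) (restrict_labels \<beta> E')
      \<or> nano_move \<tau> (restrict_labels \<beta> E) (restrict_labels \<beta> E')
      \<or> nano_move \<tau> (restrict_labels \<beta> E') (restrict_labels \<beta> E)"
    using nano_iso_restrict_labels nano_move_restrict_labels[OF assms(1,2)] by metis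
  moreover have "nanoword_over \<beta> (restrict_labels \<beta> E)" "nanoword_over \<beta> (restrict_labels \<beta> E')"
    using nano by (auto intro: nanoword_over_restrict_labels)
  ultimately show ?thesis
    unfolding nano_step_def by blast
qed

lemma nano_homotopic_restrict_labels:
  assumes "involution_on \<alpha> \<tau>" and "\<tau> ` \<beta> \<subseteq> \<beta>" and "nano_homotopic \<tau> \<alpha> E E'"
  shows "nano_homotopic \<tau> \<beta> (restrict_labels \<beta> E) (restrict_labels \<beta> E')"
  using assms(3) unfolding nano_homotopic_def
proof induction
  case (step E' E'')
  with nano_step_restrict_labels[OF assms(1,2) step(2)] show ?case
    by (metis rtranclp.rtrancl_into_rtrancl rtranclp_reflclp)
qed simp

lemma count_list_take_nth_less:
  assumes "k < length w"
  shows "count_list (take k w) (w ! k) < count_list w (w ! k)"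
proof -
  have "count_list w (w ! k) = count_list (take k w @ w ! k # drop (Suc k) w) (w ! k)"
    using id_take_nth_drop[OF assms] by (rule arg_cong)
  also have "\<dots> = count_list (take k w) (w ! k) + 1 + count_list (drop (Suc k) w) (w ! k)"
    by simp
  finally show ?thesis by simp
qed

lemma set_desing_word_subset:
  "set (desing_word w) \<subseteq> {(a, i, j) | a i j. a \<in> set w \<and> 1 \<le> i \<and> i < j \<and> j \<le> count_list w a}"
  using count_list_take_nth_less
  by (fastforce simp: desing_word_def Let_def split: if_splits)

lemma etale_word_over_desing:
  assumes "etale_word_over \<beta> E"
  shows "etale_word_over \<beta> (desing E)"
  using assms set_desing_word_subset
  by (fastforce simp: desing_def etale_word_over_def split: prod.splits)

theorem lemma3p3:
  fixes \<alpha> \<beta> :: "'a set" and \<tau> :: "'a \<Rightarrow> 'a" and E1 E2 :: "('l, 'a) etale"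
  assumes "involution_on \<alpha> \<tau>"
    and "\<beta> \<subseteq> \<alpha>"
    and "\<tau> ` \<beta> \<subseteq> \<beta>"
    and "etale_word_over \<beta> E1"
    and "etale_word_over \<beta> E2"
    and "etale_homotopic \<tau> \<alpha> E1 E2"
  shows "etale_homotopic \<tau> \<beta> E1 E2"
proof -
  have "nano_homotopic \<tau> \<beta> (restrict_labels \<beta> (desing E1)) (restrict_labels \<beta> (desing E2))"
    using nano_homotopic_restrict_labels[OF assms(1,3)] assms(6)
    by (simp add: etale_homotopic_def)
  then show ?thesis
    using assms(4,5)
    by (simp add: etale_homotopic_def etale_word_over_desing restrict_labels_etale_word_over)
qed

end
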